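(* Let $\mathcal{F}$ be the infinite rooted tree with root $\delta$ in which every vertex has $p\ge2$ children, and let $a$ be an integral weight function on $\mathcal{F}$ with weight $\omega_a$. Then $a(\delta)\ge\widehat\gamma_0(\omega_a)$.
   Context: An integral weight function with weight $\omega$ (nonnegative integer) is a map $a:V(\mathcal{F})\to\mathbb{Z}_{\ge0}$ such that every infinite path $T$ from the root satisfies $\sum_{v\in T}a(v)\ge\omega$, and $a(v)\ge\sum_{u\text{ child of }v}a(u)$ for every vertex $v$. $\widehat\gamma(\omega)$ is the lexicographically smallest sequence $(\gamma_i)_{i\ge0}$ of nonnegative integers with $\gamma_i\ge p\gamma_{i+1}$ and $\sum_i\gamma_i=\omega$. *)

theory Defs
  imports Main
begin

text \<open>The p-ary rooted tree F: vertices are finite words over {0..<p}; the root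
  delta is the empty word; the children of v are v @ [i] for i < p.\<close>

definition tree_vertices :: "nat \<Rightarrow> nat list set" where
  "tree_vertices p = {v. \<forall>x\<in>set v. x < p}"

definition tree_root :: "nat list" where
  "tree_root = []"

definition tree_children :: "nat \<Rightarrow> nat list \<Rightarrow> nat list set" where
  "tree_children p v = {v @ [i] | i. i < p}"

definition inf_path :: "nat \<Rightarrow> (nat \<Rightarrow> nat) \<Rightarrow> bool" where
  "inf_path p f \<longleftrightarrow> (\<forall>n. f n < p)"

definition path_vertex :: "(nat \<Rightarrow> nat) \<Rightarrow> nat \<Rightarrow> nat list" where
  "path_vertex f n = map f [0..<n]"

text \<open>Integral weight function with weight w. Since the values are nonnegative
  integers, the (possibly infinite) sum along a path is at least w iff some
  partial sum is at least w.\<close>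

definition integral_weight_function :: "nat \<Rightarrow> (nat list \<Rightarrow> nat) \<Rightarrow> nat \<Rightarrow> bool" where
  "integral_weight_function p a w \<longleftrightarrow>
     (\<forall>f. inf_path p f \<longrightarrow> (\<exists>N. (\<Sum>n<N. a (path_vertex f n)) \<ge> w)) \<and>
     (\<forall>v\<in>tree_vertices p. a v \<ge> (\<Sum>u\<in>tree_children p v. a u))"

definition gamma_admissible :: "nat \<Rightarrow> nat \<Rightarrow> (nat \<Rightarrow> nat) \<Rightarrow> bool" where
  "gamma_admissible p w g \<longleftrightarrow>
     (\<forall>i. g i \<ge> p * g (Suc i)) \<and> (\<exists>N. (\<forall>i\<ge>N. g i = 0) \<and> (\<Sum>i<N. g i) = w)"

definition lex_less :: "(nat \<Rightarrow> nat) \<Rightarrow> (nat \<Rightarrow> nat) \<Rightarrow> bool" where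
  "lex_less g h \<longleftrightarrow> (\<exists>k. (\<forall>i<k. g i = h i) \<and> g k < h k)"

definition gamma_hat :: "nat \<Rightarrow> nat \<Rightarrow> (nat \<Rightarrow> nat)" where
  "gamma_hat p w = (THE g. gamma_admissible p w g \<and>
      (\<forall>h. gamma_admissible p w h \<longrightarrow> g = h \<or> lex_less g h))"

end

theory Submission
  imports Defs "HOL-Library.FuncSet"
begin

text \<open>Always stepping to a cheapest child yields an infinite path along which each weight is at
  most a \<open>1/p\<close>-th of the previous one. Its weights, cut off once their total reaches \<open>\<omega>\<close>, form an
  admissible sequence for \<open>\<omega>\<close> whose first term is at most \<open>a(\<delta>)\<close>; since \<open>\<gamma>\<close>-hat is the
  lexicographically least admissible sequence, its first term is smaller still.\<close>

lemma lex_less_irrefl: "\<not> lex_less g g"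
  unfolding lex_less_def by auto

lemma lex_less_trans:
  assumes "lex_less f g" "lex_less g h"
  shows "lex_less f h"
proof -
  obtain k where k: "\<forall>i<k. f i = g i" "f k < g k" using assms(1) lex_less_def by auto
  obtain l where l: "\<forall>i<l. g i = h i" "g l < h l" using assms(2) lex_less_def by auto
  have "(\<forall>i<min k l. f i = h i) \<and> f (min k l) < h (min k l)"
    using k l by (cases k l rule: linorder_cases) auto
  then show ?thesis unfolding lex_less_def by blast
qed

lemma lex_less_linear:
  assumes "g \<noteq> h"
  shows "lex_less g h \<or> lex_less h g"
proof -
  define k where "k = (LEAST k. g k \<noteq> h k)"
  have "g k \<noteq> h k" unfolding k_def by (rule LeastI_ex) (use assms in auto)
  moreover have "\<forall>i<k. g i = h i" unfolding k_def using not_less_Least by blast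
  ultimately show ?thesis unfolding lex_less_def by (metis linorder_neqE_nat)
qed

lemma lex_less_imp_le_0: "lex_less g h \<Longrightarrow> g 0 \<le> h 0"
  unfolding lex_less_def by (metis less_or_eq_imp_le neq0_conv)

lemma finite_has_lex_least:
  "finite S \<Longrightarrow> S \<noteq> {} \<Longrightarrow> \<exists>g\<in>S. \<forall>h\<in>S. g = h \<or> lex_less g h"
proof (induction S rule: finite_ne_induct)
  case (singleton x)
  then show ?case by auto
next
  case (insert x F)
  then obtain m where m: "m \<in> F" "\<forall>h\<in>F. m = h \<or> lex_less m h" by auto
  show ?case
  proof (cases "lex_less x m")
    case True
    then have "x = h \<or> lex_less x h" if "h \<in> insert x F" for h
      using that m(2) lex_less_trans[of x m h] by auto
    then show ?thesis by blast
  next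
    case False
    then have "x = m \<or> lex_less m x" using lex_less_linear by blast
    then show ?thesis using m by blast
  qed
qed

lemma gamma_admissible_bounded:
  assumes "p \<ge> 1" "gamma_admissible p w g"
  shows "g i \<le> w" and "w \<le> i \<Longrightarrow> g i = 0"
proof -
  obtain N where N: "\<forall>i\<ge>N. g i = 0" "(\<Sum>i<N. g i) = w"
    and decay: "\<forall>i. p * g (Suc i) \<le> g i"
    using assms(2) unfolding gamma_admissible_def by auto
  have "(\<Sum>j<Suc i. g j) \<le> (\<Sum>j<max N (Suc i). g j)" by (rule sum_mono2) auto
  also have "\<dots> = w"
    using N by (subst sum.mono_neutral_right[of "{..<max N (Suc i)}" "{..<N}"]) auto
  finally have partial: "(\<Sum>j<Suc i. g j) \<le> w" .
  then show "g i \<le> w" using member_le_sum[of i "{..<Suc i}" g] by simp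
  assume "w \<le> i"
  have antimono: "g i \<le> g j" if "j \<le> i" for j
  proof (rule lift_Suc_antimono_le[of g, OF _ that])
    fix n
    have "1 * g (Suc n) \<le> p * g (Suc n)" using assms(1) by (rule mult_le_mono1)
    then show "g (Suc n) \<le> g n" using decay by (metis mult_1 le_trans)
  qed
  show "g i = 0"
  proof (rule ccontr)
    assume "g i \<noteq> 0"
    then have "1 \<le> g j" if "j \<le> i" for j
      using antimono[OF that] by simp
    then have "(\<Sum>j<Suc i. 1) \<le> (\<Sum>j<Suc i. g j)" by (intro sum_mono) simp
    then show False using partial \<open>w \<le> i\<close> by simp
  qed
qed

lemma finite_gamma_admissible:
  assumes "p \<ge> 1"
  shows "finite {g. gamma_admissible p w g}"
proof (rule inj_on_finite)
  let ?A = "{g. gamma_admissible p w g}"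
  show "inj_on (\<lambda>g. restrict g {..<w}) ?A"
  proof (rule inj_onI)
    fix g h assume "g \<in> ?A" "h \<in> ?A" and eq: "restrict g {..<w} = restrict h {..<w}"
    show "g = h"
    proof
      fix i
      show "g i = h i"
      proof (cases "i < w")
        case True
        then show ?thesis using fun_cong[OF eq, of i] by simp
      next
        case False
        then show ?thesis
          using gamma_admissible_bounded(2)[OF assms, of w _ i] \<open>g \<in> ?A\<close> \<open>h \<in> ?A\<close>
          by (metis mem_Collect_eq not_less)
      qed
    qed
  qed
  show "(\<lambda>g. restrict g {..<w}) ` ?A \<subseteq> (\<Pi>\<^sub>E i\<in>{..<w}. {..w})"
    using gamma_admissible_bounded(1)[OF assms] by (intro image_subsetI) (simp add: restrict_PiE_iff)
qed (simp add: finite_PiE)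

lemma gamma_hat_lex_least:
  assumes "p \<ge> 1"
  shows "gamma_admissible p w (gamma_hat p w)"
    and "gamma_admissible p w h \<Longrightarrow> gamma_hat p w = h \<or> lex_less (gamma_hat p w) h"
proof -
  let ?least = "\<lambda>g. gamma_admissible p w g \<and>
      (\<forall>h. gamma_admissible p w h \<longrightarrow> g = h \<or> lex_less g h)"
  have "gamma_admissible p w (\<lambda>i. if i = 0 then w else 0)"
    unfolding gamma_admissible_def by (auto intro!: exI[of _ 1])
  then have "{g. gamma_admissible p w g} \<noteq> {}" by blast
  then obtain g where "?least g"
    using finite_has_lex_least[OF finite_gamma_admissible[OF assms]] by auto
  moreover have "g' = g" if "?least g'" for g'
    using that \<open>?least g\<close> lex_less_trans lex_less_irrefl by blast
  ultimately have "?least (gamma_hat p w)"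
    unfolding gamma_hat_def by (rule theI)
  then show "gamma_admissible p w (gamma_hat p w)"
    and "gamma_admissible p w h \<Longrightarrow> gamma_hat p w = h \<or> lex_less (gamma_hat p w) h"
    by auto
qed

lemma gamma_hat_0_le:
  assumes "p \<ge> 1" "gamma_admissible p w h"
  shows "gamma_hat p w 0 \<le> h 0"
  using gamma_hat_lex_least(2)[OF assms] lex_less_imp_le_0 by auto

text \<open>Cutting \<open>g\<close> off greedily at total \<open>w\<close> keeps the decay condition, because every term
  except the last nonzero one is left unchanged.\<close>

lemma gamma_admissible_truncation:
  assumes decay: "\<forall>i. p * g (Suc i) \<le> g i" and reach: "w \<le> (\<Sum>i<N. g i)"
  shows "\<exists>h. gamma_admissible p w h \<and> h 0 \<le> g 0"
proof -
  define h where "h i = min (g i) (w - (\<Sum>j<i. g j))" for i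
  have sum_h: "(\<Sum>i<n. h i) = min w (\<Sum>i<n. g i)" for n
    by (induction n) (simp_all add: h_def)
  have "p * h (Suc i) \<le> h i" for i
  proof (cases "h (Suc i) = 0")
    case False
    then have "h i = g i" by (auto simp: h_def min_def split: if_splits)
    moreover have "h (Suc i) \<le> g (Suc i)" by (simp add: h_def)
    ultimately show ?thesis using decay by (metis le_trans mult_le_mono2)
  qed simp
  moreover have "h i = 0" if "N \<le> i" for i
  proof -
    have "(\<Sum>j<N. g j) \<le> (\<Sum>j<i. g j)" using that by (intro sum_mono2) auto
    then show ?thesis using reach by (simp add: h_def)
  qed
  moreover have "(\<Sum>i<N. h i) = w" using sum_h reach by simp
  ultimately have "gamma_admissible p w h" unfolding gamma_admissible_def by blast
  then show ?thesis by (auto simp: h_def)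
qed

lemma sum_tree_children: "(\<Sum>u\<in>tree_children p v. a u) = (\<Sum>i<p. a (v @ [i]))"
proof -
  have "tree_children p v = (\<lambda>i. v @ [i]) ` {..<p}" unfolding tree_children_def by auto
  then show ?thesis by (simp add: sum.reindex inj_on_def)
qed

lemma exists_le_average:
  fixes f :: "nat \<Rightarrow> nat"
  assumes "n \<ge> 1"
  shows "\<exists>i<n. n * f i \<le> (\<Sum>j<n. f j)"
proof -
  obtain i where i: "i < n" "\<forall>j<n. f i \<le> f j"
    using ex_has_least_nat[of "\<lambda>i. i < n" 0 f] assms by auto
  then have "(\<Sum>j<n. f i) \<le> (\<Sum>j<n. f j)" by (intro sum_mono) auto
  then show ?thesis using i(1) by auto
qed

lemma path_vertex_0: "path_vertex f 0 = []"
  by (simp add: path_vertex_def)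

lemma path_vertex_Suc: "path_vertex f (Suc n) = path_vertex f n @ [f n]"
  by (simp add: path_vertex_def)

lemma path_vertex_in_tree: "inf_path p f \<Longrightarrow> path_vertex f n \<in> tree_vertices p"
  by (auto simp: inf_path_def path_vertex_def tree_vertices_def)

lemma exists_decaying_path:
  assumes "p \<ge> 1" and super: "\<forall>v\<in>tree_vertices p. (\<Sum>u\<in>tree_children p v. a u) \<le> a v"
  shows "\<exists>f. inf_path p f \<and> (\<forall>n. p * a (path_vertex f (Suc n)) \<le> a (path_vertex f n))"
proof -
  define cheapest where
    "cheapest v = (SOME i. i < p \<and> (v \<in> tree_vertices p \<longrightarrow> p * a (v @ [i]) \<le> a v))" for v
  have cheapest: "cheapest v < p \<and> (v \<in> tree_vertices p \<longrightarrow> p * a (v @ [cheapest v]) \<le> a v)"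
    for v
  proof -
    obtain i where "i < p" "p * a (v @ [i]) \<le> (\<Sum>j<p. a (v @ [j]))"
      using exists_le_average[OF assms(1), of "\<lambda>j. a (v @ [j])"] by blast
    then have "\<exists>i. i < p \<and> (v \<in> tree_vertices p \<longrightarrow> p * a (v @ [i]) \<le> a v)"
      using super sum_tree_children[of a p v] by (metis order_trans)
    then show ?thesis unfolding cheapest_def by (rule someI_ex)
  qed
  define f where "f n = cheapest (((\<lambda>v. v @ [cheapest v]) ^^ n) [])" for n
  have vertex: "path_vertex f n = ((\<lambda>v. v @ [cheapest v]) ^^ n) []" for n
    by (induction n) (simp_all add: path_vertex_0 path_vertex_Suc f_def)
  have path: "inf_path p f" using cheapest by (simp add: inf_path_def f_def)
  have "f n = cheapest (path_vertex f n)" for n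
    by (simp add: f_def vertex)
  then have "p * a (path_vertex f (Suc n)) \<le> a (path_vertex f n)" for n
    using cheapest path_vertex_in_tree[OF path, of n] by (simp add: path_vertex_Suc)
  with path show ?thesis by blast
qed

theorem mainTheorem10:
  fixes p w :: nat and a :: "nat list \<Rightarrow> nat"
  assumes "p \<ge> 2"
    and "integral_weight_function p a w"
  shows "a tree_root \<ge> gamma_hat p w 0"
proof -
  have p: "p \<ge> 1" using assms(1) by simp
  obtain f where f: "inf_path p f" "\<forall>n. p * a (path_vertex f (Suc n)) \<le> a (path_vertex f n)"
    using exists_decaying_path[OF p] assms(2) unfolding integral_weight_function_def by blast
  obtain N where "w \<le> (\<Sum>n<N. a (path_vertex f n))"
    using f(1) assms(2) unfolding integral_weight_function_def by blast
  then obtain h where "gamma_admissible p w h" "h 0 \<le> a (path_vertex f 0)"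
    using gamma_admissible_truncation[OF f(2)] by blast
  moreover have "path_vertex f 0 = tree_root" by (simp add: path_vertex_0 tree_root_def)
  ultimately show ?thesis using gamma_hat_0_le[OF p] by fastforce
qed

end
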